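(* Let $A$ be a $\Gamma$-ring and $I\subseteq A$ an ideal such that $A/I$ inherits a $\Gamma$-ring structure making $A\to A/I$ a homomorphism of $\Gamma$-rings (i.e. $\Gamma\cdot I\subseteq I$). Let $T=3\,Q_0+2a\,Q_2\in\Gamma$ and let $N\colon A\to A$ be \begin{align*} Nx &= (Q_0x)^3 +2a\, (Q_0x)^2Q_2x -a\, Q_0x(Q_1x)^2 + a^2\,Q_0x(Q_2x)^2 - 6\, Q_0x\, Q_1x \, Q_2 x \\ &\qquad +2\,(Q_1x)^3 -2a\, Q_1x(Q_2x)^2 +4\,(Q_2x)^3. \end{align*} Then for every $x\in I$, \[ N(1+x)\equiv 1+Tx \mod I^2 . \]
   Context: $R=\mathbb{Z}[a]$ is a polynomial ring. $\Gamma$ is the associative ring equipped with a ring homomorphism $\eta\colon R\to\Gamma$, generated over $R$ by $Q_0,Q_1,Q_2$ subject to: (i) the $Q_i$ commute with elements of $\mathbb{Z}\subset R$, and $Q_0\,a = a^2Q_0-2aQ_1+6Q_2$, $Q_1\,a=3Q_0+aQ_2$, $Q_2\,a=-aQ_0+3Q_1$; (ii) $Q_1Q_0=2Q_2Q_1-2Q_0Q_2$ and $Q_2Q_0=Q_0Q_1+aQ_0Q_2-2Q_1Q_2$. A $\Gamma$-ring is a commutative $R$-algebra $A$ with a left $\Gamma$-module structure extending its $R$-module structure, such that $Q_0\cdot 1=1$, $Q_1\cdot1=Q_2\cdot 1=0$, and the cartan formulas hold for all $x,y\in A$: $Q_0(xy) = Q_0x\,Q_0y + 2\,Q_1x\,Q_2y+2\,Q_2x\,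 Q_1y$, $Q_1(xy) = Q_0x\, Q_1y + Q_1x\, Q_0y + a\,Q_1x\, Q_2y +a\, Q_2x\, Q_1y +2\, Q_2x\, Q_2y$, $Q_2(xy) = Q_0x\, Q_2y+Q_2x\, Q_0y+Q_1x\, Q_1y + a\, Q_2x\, Q_2y$. *)

theory Defs
  imports Main
begin

text \<open>A Gamma-ring: a commutative ring A which is an algebra over R = Z[a]
  (determined by the image al of the variable a), together with the action of
  the generators Q0, Q1, Q2 of Gamma, given by additive maps A -> A that satisfy
  the defining relations of Gamma (so that they extend to a left Gamma-module
  structure extending the R-module structure), the unit conditions and the
  Cartan formulas.\<close>

definition gamma_ring ::
  "'a::comm_ring_1 \<Rightarrow> ('a \<Rightarrow> 'a) \<Rightarrow> ('a \<Rightarrow> 'a) \<Rightarrow> ('a \<Rightarrow> 'a) \<Rightarrow> bool" where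
  "gamma_ring al Q0 Q1 Q2 \<longleftrightarrow>
     (\<forall>x y. Q0 (x + y) = Q0 x + Q0 y) \<and>
     (\<forall>x y. Q1 (x + y) = Q1 x + Q1 y) \<and>
     (\<forall>x y. Q2 (x + y) = Q2 x + Q2 y) \<and>
     (\<forall>x. Q0 (al * x) = al^2 * Q0 x - 2 * al * Q1 x + 6 * Q2 x) \<and>
     (\<forall>x. Q1 (al * x) = 3 * Q0 x + al * Q2 x) \<and>
     (\<forall>x. Q2 (al * x) = - al * Q0 x + 3 * Q1 x) \<and>
     (\<forall>x. Q1 (Q0 x) = 2 * Q2 (Q1 x) - 2 * Q0 (Q2 x)) \<and>
     (\<forall>x. Q2 (Q0 x) = Q0 (Q1 x) + al * Q0 (Q2 x) - 2 * Q1 (Q2 x)) \<and>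
     Q0 1 = 1 \<and> Q1 1 = 0 \<and> Q2 1 = 0 \<and>
     (\<forall>x y. Q0 (x * y) = Q0 x * Q0 y + 2 * Q1 x * Q2 y + 2 * Q2 x * Q1 y) \<and>
     (\<forall>x y. Q1 (x * y) = Q0 x * Q1 y + Q1 x * Q0 y + al * Q1 x * Q2 y
                          + al * Q2 x * Q1 y + 2 * Q2 x * Q2 y) \<and>
     (\<forall>x y. Q2 (x * y) = Q0 x * Q2 y + Q2 x * Q0 y + Q1 x * Q1 y + al * Q2 x * Q2 y)"

definition is_ideal :: "'a::comm_ring_1 set \<Rightarrow> bool" where
  "is_ideal I \<longleftrightarrow> 0 \<in> I \<and> (\<forall>x\<in>I. \<forall>y\<in>I. x + y \<in> I) \<and> (\<forall>r. \<forall>x\<in>I. r * x \<in> I)"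

definition ideal_sq :: "'a::comm_ring_1 set \<Rightarrow> 'a set" where
  "ideal_sq I = {s. \<exists>n (x::nat \<Rightarrow> 'a) y. (\<forall>i<n. x i \<in> I \<and> y i \<in> I) \<and> s = (\<Sum>i<n. x i * y i)}"

definition normN :: "'a::comm_ring_1 \<Rightarrow> ('a \<Rightarrow> 'a) \<Rightarrow> ('a \<Rightarrow> 'a) \<Rightarrow> ('a \<Rightarrow> 'a) \<Rightarrow> 'a \<Rightarrow> 'a" where
  "normN al Q0 Q1 Q2 x =
     (Q0 x)^3 + 2 * al * (Q0 x)^2 * Q2 x - al * Q0 x * (Q1 x)^2 + al^2 * Q0 x * (Q2 x)^2
     - 6 * Q0 x * Q1 x * Q2 x + 2 * (Q1 x)^3 - 2 * al * Q1 x * (Q2 x)^2 + 4 * (Q2 x)^3"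

definition opT :: "'a::comm_ring_1 \<Rightarrow> ('a \<Rightarrow> 'a) \<Rightarrow> ('a \<Rightarrow> 'a) \<Rightarrow> 'a \<Rightarrow> 'a" where
  "opT al Q0 Q2 x = 3 * Q0 x + 2 * al * Q2 x"

end

(* Since Q0 1 = 1 and Q1 1 = Q2 1 = 0, N(1 + x) is the cubic form defining N evaluated
   at (1 + u, v, w), where u, v, w are Q0 x, Q1 x, Q2 x and lie in I.  Expanding that form
   around (1, 0, 0), its constant term is 1 and its linear part is 3u + 2aw = Tx; the
   remainder is u P + v Q + w R with P, Q, R in I, hence lies in I^2. *)

theory Submission
  imports Defs
begin

lemma sum_lessThan_add_split:
  fixes h :: "nat \<Rightarrow> 'a::comm_monoid_add"
  shows "(\<Sum>i<m + n. h i) = (\<Sum>i<m. h i) + (\<Sum>i<n. h (i + m))"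
proof -
  have "(\<Sum>i<m + n. h i) = sum h {0..<m} + sum h {0 + m..<n + m}"
    by (simp add: sum.atLeastLessThan_concat add.commute atLeast0LessThan[symmetric])
  then show ?thesis
    by (simp only: sum.shift_bounds_nat_ivl atLeast0LessThan)
qed

lemma ideal_sq_mult:
  assumes "x \<in> I" "y \<in> I"
  shows "x * y \<in> ideal_sq I"
  unfolding ideal_sq_def
proof (intro CollectI exI conjI)
  show "\<forall>i<1. (\<lambda>_. x) i \<in> I \<and> (\<lambda>_. y) i \<in> I" using assms by simp
  show "x * y = (\<Sum>i<1::nat. (\<lambda>_. x) i * (\<lambda>_. y) i)" by simp
qed

lemma ideal_sq_add:
  assumes "s \<in> ideal_sq I" "t \<in> ideal_sq I"
  shows "s + t \<in> ideal_sq I"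
proof -
  from assms(1) obtain m :: nat and x y
    where xy: "\<forall>i<m. x i \<in> I \<and> y i \<in> I" and s: "s = (\<Sum>i<m. x i * y i)"
    unfolding ideal_sq_def by blast
  from assms(2) obtain n :: nat and x' y'
    where xy': "\<forall>i<n. x' i \<in> I \<and> y' i \<in> I" and t: "t = (\<Sum>i<n. x' i * y' i)"
    unfolding ideal_sq_def by blast
  define X where "X i = (if i < m then x i else x' (i - m))" for i
  define Y where "Y i = (if i < m then y i else y' (i - m))" for i
  have "s + t = (\<Sum>i<m + n. X i * Y i)"
    by (simp add: sum_lessThan_add_split s t X_def Y_def)
  moreover have "\<forall>i<m + n. X i \<in> I \<and> Y i \<in> I"
    using xy xy' by (simp add: X_def Y_def)
  ultimately show ?thesis
    unfolding ideal_sq_def by blast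
qed

lemma gamma_ring_one_plus:
  assumes "gamma_ring al Q0 Q1 Q2"
  shows "Q0 (1 + x) = 1 + Q0 x" "Q1 (1 + x) = Q1 x" "Q2 (1 + x) = Q2 x"
  using assms unfolding gamma_ring_def by auto

lemma normN_expansion:
  assumes "Q0 y = 1 + u" "Q1 y = v" "Q2 y = w"
  shows "normN al Q0 Q1 Q2 y - (1 + (3 * u + 2 * al * w))
    = u * ((3 + u) * u + (2 * al * (2 + u)) * w)
    + v * ((2 * v - al * (1 + u)) * v + (- 6 * (1 + u) - 2 * al * w) * w)
    + w * ((al\<^sup>2 * (1 + u)) * w + (4 * w) * w)"
  unfolding normN_def assms by (simp add: algebra_simps power2_eq_square power3_eq_cube)

lemma is_ideal_lincomb:
  assumes "is_ideal I" "x \<in> I" "y \<in> I"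
  shows "r * x + s * y \<in> I"
  using assms unfolding is_ideal_def by blast

theorem mainTheorem5:
  fixes al :: "'a::comm_ring_1" and Q0 Q1 Q2 :: "'a \<Rightarrow> 'a" and I :: "'a set"
  assumes "gamma_ring al Q0 Q1 Q2"
    and "is_ideal I"
    and "\<forall>x\<in>I. Q0 x \<in> I \<and> Q1 x \<in> I \<and> Q2 x \<in> I"
    and "x \<in> I"
  shows "normN al Q0 Q1 Q2 (1 + x) - (1 + opT al Q0 Q2 x) \<in> ideal_sq I"
proof -
  define u v w where "u = Q0 x" and "v = Q1 x" and "w = Q2 x"
  have uvw: "u \<in> I" "v \<in> I" "w \<in> I"
    using assms(3,4) by (auto simp: u_def v_def w_def)
  have one_plus: "Q0 (1 + x) = 1 + u" "Q1 (1 + x) = v" "Q2 (1 + x) = w"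
    using gamma_ring_one_plus[OF assms(1)] by (simp_all add: u_def v_def w_def)
  have "normN al Q0 Q1 Q2 (1 + x) - (1 + opT al Q0 Q2 x)
    = u * ((3 + u) * u + (2 * al * (2 + u)) * w)
    + v * ((2 * v - al * (1 + u)) * v + (- 6 * (1 + u) - 2 * al * w) * w)
    + w * ((al\<^sup>2 * (1 + u)) * w + (4 * w) * w)"
    unfolding opT_def u_def [symmetric] w_def [symmetric]
    by (rule normN_expansion) (fact one_plus)+
  also have "\<dots> \<in> ideal_sq I"
    using uvw is_ideal_lincomb[OF assms(2)] by (intro ideal_sq_add ideal_sq_mult) auto
  finally show ?thesis .
qed

end
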